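(* For every integer $\ell\geq 1$ there is a first-order prenex sentence $\varphi_\ell$ over $\tau_{\mathsf{ord}}$ that is true in $L_\ell$ and false in $L_m$ for every $m\geq 1$ with $m\neq \ell$, such that $\varphi_\ell$ has at most $q^*(\ell)+2$ quantifiers and its quantifier prefix strictly alternates between $\exists$ and $\forall$ and ends with $\forall$.
   Context: Vocabulary $\tau_{\mathsf{ord}} = \langle < ;\ \mathsf{min}, \mathsf{max}\rangle$ with $<$ binary and $\mathsf{min},\mathsf{max}$ constants. For $\ell \geq 1$, $L_\ell$ is the linear order with $\ell+1$ elements (its length is $\ell$), with $\mathsf{min},\mathsf{max}$ interpreted as first and last elements. Define $q^*_\forall, q^*_\exists : \mathbb{Z}_{\geq 1}\to\mathbb{N}$ by $q^*_\forall(1)=1$, $q^*_\exists(1)=2$, $q^*_\forall(2)=2$, and $q^*_\exists(2\ell) = q^*_\forall(\ell)+1$ ($\ell\geq 1$); $q^*_\exists(2\ell+1) = q^*_\forall(\ell+1)+1$ ($\ell \geq 1$); $q^*_\forall(2\ell) = q^*_\exists(\ell)+1$ ($\ell\geq 2$); $q^*_\forall(2\ell+1) = q^*_\exists(\ell)+1$ ($\ell\geq 1$). Let $q^*(\ell) = \min(q^*_\exists(\ell), q^*_\forall(\ell))$. *)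

theory Defs
  imports Main
begin

datatype trm = Var nat | Cmin | Cmax

datatype qf = Less "trm" "trm" | Eq "trm" "trm" | TT | FF
  | Neg qf | Conj qf qf | Disj qf qf

datatype quant = QEx | QAll

text \<open>A prenex formula: a quantifier prefix and a quantifier-free matrix.
  Variable i of the matrix is bound by the i-th quantifier of the prefix.\<close>
type_synonym prenex = "quant list \<times> qf"

fun term_vars :: "trm \<Rightarrow> nat set" where
  "term_vars (Var i) = {i}"
| "term_vars Cmin = {}"
| "term_vars Cmax = {}"

fun qf_vars :: "qf \<Rightarrow> nat set" where
  "qf_vars (Less s t) = term_vars s \<union> term_vars t"
| "qf_vars (Eq s t) = term_vars s \<union> term_vars t"
| "qf_vars TT = {}"
| "qf_vars FF = {}"
| "qf_vars (Neg p) = qf_vars p"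
| "qf_vars (Conj p q) = qf_vars p \<union> qf_vars q"
| "qf_vars (Disj p q) = qf_vars p \<union> qf_vars q"

definition is_sentence :: "prenex \<Rightarrow> bool" where
  "is_sentence \<phi> = (\<forall>i\<in>qf_vars (snd \<phi>). i < length (fst \<phi>))"

text \<open>The linear order L_l has universe {0..l}, < is the usual order,
  min = 0 and max = l.\<close>
fun term_val :: "nat \<Rightarrow> nat list \<Rightarrow> trm \<Rightarrow> nat" where
  "term_val l vs (Var i) = vs ! i"
| "term_val l vs Cmin = 0"
| "term_val l vs Cmax = l"

fun qf_sat :: "nat \<Rightarrow> nat list \<Rightarrow> qf \<Rightarrow> bool" where
  "qf_sat l vs (Less s t) = (term_val l vs s < term_val l vs t)"
| "qf_sat l vs (Eq s t) = (term_val l vs s = term_val l vs t)"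
| "qf_sat l vs TT = True"
| "qf_sat l vs FF = False"
| "qf_sat l vs (Neg p) = (\<not> qf_sat l vs p)"
| "qf_sat l vs (Conj p q) = (qf_sat l vs p \<and> qf_sat l vs q)"
| "qf_sat l vs (Disj p q) = (qf_sat l vs p \<or> qf_sat l vs q)"

fun prefix_sat :: "nat \<Rightarrow> quant list \<Rightarrow> qf \<Rightarrow> nat list \<Rightarrow> bool" where
  "prefix_sat l [] \<psi> vs = qf_sat l vs \<psi>"
| "prefix_sat l (QEx # qs) \<psi> vs = (\<exists>a\<in>{0..l}. prefix_sat l qs \<psi> (vs @ [a]))"
| "prefix_sat l (QAll # qs) \<psi> vs = (\<forall>a\<in>{0..l}. prefix_sat l qs \<psi> (vs @ [a]))"

definition holds_in_L :: "nat \<Rightarrow> prenex \<Rightarrow> bool" where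
  "holds_in_L l \<phi> = prefix_sat l (fst \<phi>) (snd \<phi>) []"

definition alternating_ends_forall :: "quant list \<Rightarrow> bool" where
  "alternating_ends_forall qs =
     (qs \<noteq> [] \<and> last qs = QAll \<and> (\<forall>i. Suc i < length qs \<longrightarrow> qs ! i \<noteq> qs ! Suc i))"

section \<open>The functions q*_forall, q*_exists (values at 0 are irrelevant)\<close>

fun qstarA :: "nat \<Rightarrow> nat" and qstarE :: "nat \<Rightarrow> nat" where
  "qstarE n = (if n \<le> 1 then 2
               else if even n then qstarA (n div 2) + 1
               else qstarA (n div 2 + 1) + 1)"
| "qstarA n = (if n \<le> 1 then 1
               else if n = 2 then 2
               else qstarE (n div 2) + 1)"

definition qstar :: "nat \<Rightarrow> nat" where
  "qstar l = min (qstarE l) (qstarA l)"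

end

theory Submission
  imports Defs
begin

text \<open>
  A sentence true exactly in \<open>L\<^sub>l\<close> says that \<open>min + l = max\<close>.  The statement \<open>s + g \<le> t\<close> is
  expressed by a game: \<open>\<exists>\<close> picks a point \<open>a\<close> splitting \<open>[s, t]\<close> into parts of lengths
  \<open>\<lceil>g/2\<rceil>\<close> and \<open>\<lfloor>g/2\<rfloor>\<close>, then \<open>\<forall>\<close> picks a point \<open>b\<close>, which both selects the half that is
  checked recursively (\<open>b \<le> a\<close> or \<open>b > a\<close>) and is the first move of the game on that half.
  So every quantifier halves the gap while the prefix keeps alternating; dually for the
  \<open>\<forall>\<close>-first game.  Equality costs one more universal quantifier \<open>z\<close> (at \<open>z = t\<close> the gap is
  at least \<open>l\<close>, strictly inside it is smaller) or, splitting \<open>l\<close> once more, a leading \<open>\<exists>\<forall>\<close>.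
  The halving recursion of the construction and those defining \<open>q*\<^sub>\<exists>\<close>, \<open>q*\<^sub>\<forall>\<close> are compared
  through common thresholds.
\<close>

fun flipq :: "quant \<Rightarrow> quant" where
  "flipq QEx = QAll"
| "flipq QAll = QEx"

fun alt :: "quant \<Rightarrow> nat \<Rightarrow> quant list" where
  "alt q 0 = []"
| "alt q (Suc n) = q # alt (flipq q) n"

lemma length_alt [simp]: "length (alt q n) = n"
  by (induction n arbitrary: q) auto

lemma nth_alt: "i < n \<Longrightarrow> alt q n ! i = (if even i then q else flipq q)"
proof (induction n arbitrary: q i)
  case (Suc n)
  then show ?case by (cases q; cases i) auto
qed simp

lemma map_flipq_alt: "map flipq (alt q n) = alt (flipq q) n"
  by (induction n arbitrary: q) auto

lemma alternating_ends_forall_alt: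
  "alternating_ends_forall (alt q n) \<longleftrightarrow> n \<noteq> 0 \<and> (q = QAll \<longleftrightarrow> odd n)"
proof (cases n)
  case (Suc m)
  then have "alt q n \<noteq> []" and "last (alt q n) = alt q n ! m"
    using last_conv_nth[of "alt q n"] by auto
  with Suc show ?thesis
    unfolding alternating_ends_forall_def by (cases q) (auto simp: nth_alt simp del: alt.simps)
qed (simp add: alternating_ends_forall_def)

definition in_scope :: "nat \<Rightarrow> trm \<Rightarrow> bool" where
  "in_scope j t \<longleftrightarrow> term_vars t \<subseteq> {..<j}"

lemma in_scope_simps [simp]:
  "in_scope j (Var i) \<longleftrightarrow> i < j" "in_scope j Cmin" "in_scope j Cmax"
  by (auto simp: in_scope_def)

lemma in_scope_Suc: "in_scope j t \<Longrightarrow> in_scope (Suc j) t"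
  by (auto simp: in_scope_def)

lemma term_val_append [simp]:
  "in_scope (length vs) t \<Longrightarrow> term_val l (vs @ ws) t = term_val l vs t"
  by (cases t) (auto simp: in_scope_def nth_append)

lemma term_val_le:
  "set vs \<subseteq> {..l} \<Longrightarrow> in_scope (length vs) t \<Longrightarrow> term_val l vs t \<le> l"
  using nth_mem by (cases t) (fastforce simp: in_scope_def)+

lemma qf_sat_append:
  "qf_vars p \<subseteq> {..<length vs} \<Longrightarrow> qf_sat l (vs @ ws) p = qf_sat l vs p"
proof (induction p)
  case (Less s t)
  then have "in_scope (length vs) s" "in_scope (length vs) t" by (auto simp: in_scope_def)
  then show ?case by simp
next
  case (Eq s t)
  then have "in_scope (length vs) s" "in_scope (length vs) t" by (auto simp: in_scope_def)
  then show ?case by simp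
qed auto

lemma prefix_sat_qf:
  "qf_vars p \<subseteq> {..<length vs} \<Longrightarrow> prefix_sat l qs p vs = qf_sat l vs p"
proof (induction qs arbitrary: vs)
  case (Cons q qs)
  have "qf_vars p \<subseteq> {..<length (vs @ [a])}" for a
    using Cons.prems by auto
  then have "prefix_sat l qs p (vs @ [a]) = qf_sat l vs p" for a
    using Cons.IH qf_sat_append[OF Cons.prems] by simp
  then show ?case by (cases q) auto
qed simp

lemma prefix_sat_neg: "prefix_sat l (map flipq qs) (Neg p) vs \<longleftrightarrow> \<not> prefix_sat l qs p vs"
proof (induction qs arbitrary: vs)
  case (Cons q qs)
  then show ?case by (cases q) auto
qed simp

definition qf_ite :: "qf \<Rightarrow> qf \<Rightarrow> qf \<Rightarrow> qf" where
  "qf_ite c p q = Disj (Conj c p) (Conj (Neg c) q)"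

lemma qf_vars_qf_ite [simp]: "qf_vars (qf_ite c p q) = qf_vars c \<union> qf_vars p \<union> qf_vars q"
  by (auto simp: qf_ite_def)

lemma qf_sat_qf_ite [simp]:
  "qf_sat l vs (qf_ite c p q) = (if qf_sat l vs c then qf_sat l vs p else qf_sat l vs q)"
  by (simp add: qf_ite_def)

lemma prefix_sat_qf_ite:
  assumes "qf_vars c \<subseteq> {..<length vs}"
  shows "prefix_sat l qs (qf_ite c p q) vs =
    (if qf_sat l vs c then prefix_sat l qs p vs else prefix_sat l qs q vs)"
  using assms
proof (induction qs arbitrary: vs)
  case Nil
  then show ?case by (simp add: qf_ite_def)
next
  case (Cons q' qs)
  have "qf_vars c \<subseteq> {..<length (vs @ [a])}" for a
    using Cons.prems by auto
  then have "prefix_sat l qs (qf_ite c p q) (vs @ [a]) =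
    (if qf_sat l vs c then prefix_sat l qs p (vs @ [a]) else prefix_sat l qs q (vs @ [a]))" for a
    using Cons.IH qf_sat_append[OF Cons.prems] by simp
  then show ?case by (cases q') auto
qed

definition Le :: "trm \<Rightarrow> trm \<Rightarrow> qf" where
  "Le s t = Disj (Less s t) (Eq s t)"

lemma qf_vars_Le [simp]: "qf_vars (Le s t) = term_vars s \<union> term_vars t"
  by (simp add: Le_def)

lemma qf_sat_Le [simp]: "qf_sat l vs (Le s t) \<longleftrightarrow> term_val l vs s \<le> term_val l vs t"
  by (auto simp: Le_def)

lemma prefix_sat_select:
  "prefix_sat l qs (qf_ite (Le (Var (Suc (length vs))) (Var (length vs))) p q) (vs @ [a, b]) =
    (if b \<le> a then prefix_sat l qs p (vs @ [a, b]) else prefix_sat l qs q (vs @ [a, b]))"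
  by (subst prefix_sat_qf_ite) (auto simp: nth_append)

section \<open>Games on a gap\<close>

text \<open>What \<open>ge_ex\<close> and \<open>ge_all\<close> below express once their first variable is fixed: \<open>\<exists>\<close> splits the
  gap into halves, \<open>\<forall>\<close> picks a point refuting one half.  Off the interval \<open>(s, t]\<close> the test
  \<open>gap_test\<close> holds trivially and \<open>splits_gap\<close> fails, so a selecting variable may be reused as a
  first move.\<close>

definition splits_gap :: "nat \<Rightarrow> nat \<Rightarrow> nat \<Rightarrow> nat \<Rightarrow> bool" where
  "splits_gap g s t a \<longleftrightarrow> (if g \<le> 1 then s < t
     else s < a \<and> a < t \<and> s + (g + 1) div 2 \<le> a \<and> a + g div 2 \<le> t)"

definition gap_test :: "nat \<Rightarrow> nat \<Rightarrow> nat \<Rightarrow> nat \<Rightarrow> bool" where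
  "gap_test g s t b \<longleftrightarrow> (if g \<le> 1 \<or> \<not> (s < b \<and> b \<le> t) then s < t
     else s + (g div 2 + 1) \<le> b \<or> b + (g + 1) div 2 \<le> t)"

definition exact_gap_test :: "nat \<Rightarrow> nat \<Rightarrow> nat \<Rightarrow> nat \<Rightarrow> bool" where
  "exact_gap_test n s t z \<longleftrightarrow>
     (if z = t then s + n \<le> t else if s < z \<and> z < t then \<not> s + n \<le> z else True)"

lemma splits_gap_imp: "splits_gap g s t a \<Longrightarrow> 1 \<le> g \<Longrightarrow> s + g \<le> t"
  by (auto simp: splits_gap_def split: if_splits)

lemma splits_gap_midpoint:
  "s + g \<le> t \<Longrightarrow> 2 \<le> g \<Longrightarrow> splits_gap g s t (s + (g + 1) div 2)"
  by (auto simp: splits_gap_def)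

lemma ex_splits_gap_iff:
  assumes "t \<le> l" "1 \<le> g"
  shows "(\<exists>a\<in>{0..l}. splits_gap g s t a) \<longleftrightarrow> s + g \<le> t"
proof
  assume gap: "s + g \<le> t"
  define a where "a = (if g \<le> 1 then 0 else s + (g + 1) div 2)"
  have "a \<le> t" "splits_gap g s t a"
    using gap assms splits_gap_midpoint[of s g t] by (auto simp: a_def splits_gap_def)
  with assms show "\<exists>a\<in>{0..l}. splits_gap g s t a" by (intro bexI[of _ a]) auto
qed (use assms splits_gap_imp in blast)

lemma all_gap_test_iff:
  assumes "s \<le> l" "t \<le> l" "1 \<le> g"
  shows "(\<forall>b\<in>{0..l}. gap_test g s t b) \<longleftrightarrow> s + g \<le> t"
proof
  assume all: "\<forall>b\<in>{0..l}. gap_test g s t b"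
  then have "s < t"
    using assms by (auto simp: gap_test_def dest: bspec[of _ _ s])
  show "s + g \<le> t"
  proof (rule ccontr)
    assume short: "\<not> s + g \<le> t"
    with \<open>s < t\<close> have "2 \<le> g" by simp
    define b where "b = min (s + g div 2) t"
    have "s < b" "b \<le> t" "b \<in> {0..l}"
      using \<open>s < t\<close> \<open>2 \<le> g\<close> assms by (auto simp: b_def)
    moreover have "g div 2 + (g + 1) div 2 = g" by presburger
    then have "\<not> s + (g div 2 + 1) \<le> b" "\<not> b + (g + 1) div 2 \<le> t"
      using short \<open>2 \<le> g\<close> by (auto simp: b_def min_def)
    ultimately have "\<not> gap_test g s t b"
      by (simp add: gap_test_def)
    with all \<open>b \<in> {0..l}\<close> show False by blast
  qed
qed (use assms in \<open>auto simp: gap_test_def\<close>)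

lemma all_gap_test_split_iff:
  assumes "s < a" "a < t" "t \<le> l" "1 \<le> g" "1 \<le> h"
  shows "(\<forall>b\<in>{0..l}. if b \<le> a then gap_test g s a b else gap_test h a t b)
    \<longleftrightarrow> s + g \<le> a \<and> a + h \<le> t"
proof -
  have "gap_test g s a b" if "\<not> b \<le> a" for b
    using that assms by (auto simp: gap_test_def)
  moreover have "gap_test h a t b" if "b \<le> a" for b
    using that assms by (auto simp: gap_test_def)
  ultimately have "(\<forall>b\<in>{0..l}. if b \<le> a then gap_test g s a b else gap_test h a t b)
    \<longleftrightarrow> (\<forall>b\<in>{0..l}. gap_test g s a b) \<and> (\<forall>b\<in>{0..l}. gap_test h a t b)"
    by auto
  then show ?thesis
    using assms by (simp add: all_gap_test_iff)
qed

lemma ex_splits_gap_split_iff: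
  assumes "b \<le> t" "t \<le> l" "1 \<le> g" "1 \<le> h"
  shows "(\<exists>a\<in>{0..l}. if a \<le> b then splits_gap g s b a else splits_gap h b t a)
    \<longleftrightarrow> s + g \<le> b \<or> b + h \<le> t"
proof
  assume "\<exists>a\<in>{0..l}. if a \<le> b then splits_gap g s b a else splits_gap h b t a"
  then show "s + g \<le> b \<or> b + h \<le> t"
    using assms by (auto split: if_splits dest: splits_gap_imp)
next
  assume "s + g \<le> b \<or> b + h \<le> t"
  then show "\<exists>a\<in>{0..l}. if a \<le> b then splits_gap g s b a else splits_gap h b t a"
  proof
    assume gap: "s + g \<le> b"
    define a where "a = (if g \<le> 1 then 0 else s + (g + 1) div 2)"
    have "a \<le> b" "splits_gap g s b a"
      using gap assms splits_gap_midpoint[of s g b] by (auto simp: a_def splits_gap_def)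
    with assms show ?thesis by (intro bexI[of _ a]) auto
  next
    assume gap: "b + h \<le> t"
    define a where "a = (if h \<le> 1 then t else b + (h + 1) div 2)"
    have "b < a" "a \<le> t" "splits_gap h b t a"
      using gap splits_gap_midpoint[of b h t] assms by (auto simp: a_def splits_gap_def)
    with assms show ?thesis by (intro bexI[of _ a]) auto
  qed
qed

lemma all_exact_gap_test_iff:
  assumes "t \<le> l" "1 \<le> n"
  shows "(\<forall>z\<in>{0..l}. exact_gap_test n s t z) \<longleftrightarrow> s + n = t"
proof
  assume all: "\<forall>z\<in>{0..l}. exact_gap_test n s t z"
  then have "s + n \<le> t"
    using assms by (auto simp: exact_gap_test_def dest: bspec[of _ _ t])
  moreover have "\<not> s + n < t"
  proof
    assume "s + n < t"
    then have "\<not> exact_gap_test n s t (t - 1)"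
      using assms by (auto simp: exact_gap_test_def)
    with all assms show False by auto
  qed
  ultimately show "s + n = t" by simp
qed (use assms in \<open>auto simp: exact_gap_test_def\<close>)

lemma all_exact_gap_test_split_iff:
  assumes "a < t" "t \<le> l" "1 \<le> m" "1 \<le> n"
  shows "(\<forall>b\<in>{0..l}. if b \<le> a then exact_gap_test m s a b else exact_gap_test n a t b)
    \<longleftrightarrow> s + m = a \<and> a + n = t"
proof -
  have "exact_gap_test m s a b" if "\<not> b \<le> a" for b
    using that by (auto simp: exact_gap_test_def)
  moreover have "exact_gap_test n a t b" if "b \<le> a" for b
    using that assms by (auto simp: exact_gap_test_def)
  ultimately have "(\<forall>b\<in>{0..l}. if b \<le> a then exact_gap_test m s a b else exact_gap_test n a t b)
    \<longleftrightarrow> (\<forall>b\<in>{0..l}. exact_gap_test m s a b) \<and> (\<forall>b\<in>{0..l}. exact_gap_test n a t b)"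
    by auto
  then show ?thesis
    using assms by (simp add: all_exact_gap_test_iff)
qed

section \<open>Sentences bounding a gap from below\<close>

text \<open>\<open>fits_ex v g\<close> (\<open>fits_all v g\<close>): the construction below expresses a gap of length at least \<open>g\<close>
  with an alternating prefix of length \<open>v\<close> that starts with \<open>\<exists>\<close> (\<open>\<forall>\<close>).\<close>

fun fits_ex :: "nat \<Rightarrow> nat \<Rightarrow> bool" and fits_all :: "nat \<Rightarrow> nat \<Rightarrow> bool" where
  "fits_ex 0 g \<longleftrightarrow> g \<le> 1"
| "fits_ex (Suc v) g \<longleftrightarrow> g \<le> 1 \<or> fits_all v ((g + 1) div 2) \<and> fits_all v (g div 2)"
| "fits_all 0 g \<longleftrightarrow> g \<le> 1"
| "fits_all (Suc v) g \<longleftrightarrow> g \<le> 1 \<or> fits_ex v (g div 2 + 1) \<and> fits_ex v ((g + 1) div 2)"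

text \<open>\<open>ge_ex v g j s t\<close> and \<open>ge_all v g j s t\<close> say \<open>s + g \<le> t\<close> under the prefixes \<open>alt QEx v\<close> and
  \<open>alt QAll v\<close>, whose variables are \<open>Var j, Var (j + 1), \<dots>\<close>.\<close>

fun ge_ex :: "nat \<Rightarrow> nat \<Rightarrow> nat \<Rightarrow> trm \<Rightarrow> trm \<Rightarrow> qf"
  and ge_all :: "nat \<Rightarrow> nat \<Rightarrow> nat \<Rightarrow> trm \<Rightarrow> trm \<Rightarrow> qf" where
  "ge_ex 0 g j s t = Less s t"
| "ge_ex (Suc v) g j s t = (if g \<le> 1 then Less s t else
     qf_ite (Conj (Less s (Var j)) (Less (Var j) t))
       (let p = ge_all v ((g + 1) div 2) (Suc j) s (Var j); q = ge_all v (g div 2) (Suc j) (Var j) t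
        in if v = 0 then Conj p q else qf_ite (Le (Var (Suc j)) (Var j)) p q)
       FF)"
| "ge_all 0 g j s t = Less s t"
| "ge_all (Suc v) g j s t = (if g \<le> 1 then Less s t else
     qf_ite (Conj (Less s (Var j)) (Le (Var j) t))
       (let p = ge_ex v (g div 2 + 1) (Suc j) s (Var j); q = ge_ex v ((g + 1) div 2) (Suc j) (Var j) t
        in if v = 0 then Disj p q else qf_ite (Le (Var (Suc j)) (Var j)) p q)
       (Less s t))"

lemma qf_vars_ge:
  "qf_vars (ge_ex v g j s t) \<subseteq> {..<j + v} \<union> term_vars s \<union> term_vars t \<and>
   qf_vars (ge_all v g j s t) \<subseteq> {..<j + v} \<union> term_vars s \<union> term_vars t"
proof (induction v arbitrary: g j s t)
  case (Suc v)
  have "qf_vars (ge_ex v g' (Suc j) s' t') \<union> qf_vars (ge_all v g' (Suc j) s' t')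
      \<subseteq> {..<j + Suc v} \<union> term_vars s \<union> term_vars t"
    if "s' = s \<or> s' = Var j" "t' = t \<or> t' = Var j" for g' s' t'
    using Suc.IH[of g' "Suc j" s' t'] that by auto
  then show ?case by (auto simp: Let_def)
qed auto

definition ge_ex_first_move :: "nat \<Rightarrow> nat \<Rightarrow> nat \<Rightarrow> bool" where
  "ge_ex_first_move l v g \<longleftrightarrow> (\<forall>vs s t a. set vs \<subseteq> {..l} \<longrightarrow>
     in_scope (length vs) s \<longrightarrow> in_scope (length vs) t \<longrightarrow> a \<le> l \<longrightarrow>
     prefix_sat l (alt QAll v) (ge_ex (Suc v) g (length vs) s t) (vs @ [a]) =
       splits_gap g (term_val l vs s) (term_val l vs t) a)"

definition ge_all_first_move :: "nat \<Rightarrow> nat \<Rightarrow> nat \<Rightarrow> bool" where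
  "ge_all_first_move l v g \<longleftrightarrow> (\<forall>vs s t b. set vs \<subseteq> {..l} \<longrightarrow>
     in_scope (length vs) s \<longrightarrow> in_scope (length vs) t \<longrightarrow> b \<le> l \<longrightarrow>
     prefix_sat l (alt QEx v) (ge_all (Suc v) g (length vs) s t) (vs @ [b]) =
       gap_test g (term_val l vs s) (term_val l vs t) b)"

lemma prefix_sat_Less_append:
  assumes "in_scope (length vs) s" "in_scope (length vs) t"
  shows "prefix_sat l qs (Less s t) (vs @ ws) \<longleftrightarrow> term_val l vs s < term_val l vs t"
  using assms by (subst prefix_sat_qf) (auto simp: in_scope_def)

lemma ge_ex_first_move_trivial: "g \<le> 1 \<Longrightarrow> ge_ex_first_move l v g"
  unfolding ge_ex_first_move_def
  by (auto simp: prefix_sat_Less_append splits_gap_def simp del: alt.simps)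

lemma ge_all_first_move_trivial: "g \<le> 1 \<Longrightarrow> ge_all_first_move l v g"
  unfolding ge_all_first_move_def
  by (auto simp: prefix_sat_Less_append gap_test_def simp del: alt.simps)

lemma ge_ex_first_move_0: "fits_ex 1 g \<Longrightarrow> ge_ex_first_move l 0 g"
  unfolding ge_ex_first_move_def
  by (auto simp: prefix_sat_Less_append splits_gap_def nth_append)

lemma prefix_sat_select_ge_all:
  assumes "ge_all_first_move l v g" "ge_all_first_move l v h"
    and vs: "set vs \<subseteq> {..l}" and s: "in_scope (length vs) s" and t: "in_scope (length vs) t"
    and a: "a \<le> l"
  shows "prefix_sat l (alt QAll (Suc v)) (qf_ite (Le (Var (Suc (length vs))) (Var (length vs)))
      (ge_all (Suc v) g (Suc (length vs)) s (Var (length vs)))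
      (ge_all (Suc v) h (Suc (length vs)) (Var (length vs)) t)) (vs @ [a]) \<longleftrightarrow>
    (\<forall>b\<in>{0..l}. if b \<le> a then gap_test g (term_val l vs s) a b
                   else gap_test h a (term_val l vs t) b)"
proof -
  have scope: "set (vs @ [a]) \<subseteq> {..l}" "in_scope (length (vs @ [a])) s"
    "in_scope (length (vs @ [a])) t" "in_scope (length (vs @ [a])) (Var (length vs))"
    using vs a s t by (auto simp: in_scope_Suc)
  have "prefix_sat l (alt QEx v) (ge_all (Suc v) g (Suc (length vs)) s (Var (length vs))) (vs @ [a, b])
      = gap_test g (term_val l vs s) a b"
    "prefix_sat l (alt QEx v) (ge_all (Suc v) h (Suc (length vs)) (Var (length vs)) t) (vs @ [a, b])
      = gap_test h a (term_val l vs t) b" if "b \<le> l" for b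
    using assms(1,2)[unfolded ge_all_first_move_def, rule_format, OF scope(1)] scope(2-4) that s t
    by (simp_all del: ge_all.simps)
  then show ?thesis
    by (simp add: prefix_sat_select del: ge_all.simps)
qed

lemma prefix_sat_select_ge_ex:
  assumes "ge_ex_first_move l v g" "ge_ex_first_move l v h"
    and vs: "set vs \<subseteq> {..l}" and s: "in_scope (length vs) s" and t: "in_scope (length vs) t"
    and b: "b \<le> l"
  shows "prefix_sat l (alt QEx (Suc v)) (qf_ite (Le (Var (Suc (length vs))) (Var (length vs)))
      (ge_ex (Suc v) g (Suc (length vs)) s (Var (length vs)))
      (ge_ex (Suc v) h (Suc (length vs)) (Var (length vs)) t)) (vs @ [b]) \<longleftrightarrow>
    (\<exists>a\<in>{0..l}. if a \<le> b then splits_gap g (term_val l vs s) b a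
                   else splits_gap h b (term_val l vs t) a)"
proof -
  have scope: "set (vs @ [b]) \<subseteq> {..l}" "in_scope (length (vs @ [b])) s"
    "in_scope (length (vs @ [b])) t" "in_scope (length (vs @ [b])) (Var (length vs))"
    using vs b s t by (auto simp: in_scope_Suc)
  have "prefix_sat l (alt QAll v) (ge_ex (Suc v) g (Suc (length vs)) s (Var (length vs))) (vs @ [b, a])
      = splits_gap g (term_val l vs s) b a"
    "prefix_sat l (alt QAll v) (ge_ex (Suc v) h (Suc (length vs)) (Var (length vs)) t) (vs @ [b, a])
      = splits_gap h b (term_val l vs t) a" if "a \<le> l" for a
    using assms(1,2)[unfolded ge_ex_first_move_def, rule_format, OF scope(1)] scope(2-4) that s t
    by (simp_all del: ge_ex.simps)
  then show ?thesis
    by (simp add: prefix_sat_select del: ge_ex.simps)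
qed

lemma ge_ex_first_move_Suc:
  assumes "2 \<le> g" and fits: "fits_ex (Suc (Suc v)) g"
    and IH: "\<And>h. fits_all (Suc v) h \<Longrightarrow> ge_all_first_move l v h"
  shows "ge_ex_first_move l (Suc v) g"
  unfolding ge_ex_first_move_def
proof (intro allI impI)
  fix vs s t a
  assume vs: "set vs \<subseteq> {..l}" and s: "in_scope (length vs) s" and t: "in_scope (length vs) t"
    and a: "a \<le> l"
  define j sv tv where "j = length vs" and "sv = term_val l vs s" and "tv = term_val l vs t"
  have vals: "term_val l (vs @ [a]) s = sv" "term_val l (vs @ [a]) t = tv"
    "term_val l (vs @ [a]) (Var j) = a"
    using s t by (simp_all add: sv_def tv_def j_def)
  let ?p = "ge_all (Suc v) ((g + 1) div 2) (Suc j) s (Var j)"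
  let ?q = "ge_all (Suc v) (g div 2) (Suc j) (Var j) t"
  have halves: "1 \<le> (g + 1) div 2" "1 \<le> g div 2"
    "ge_all_first_move l v ((g + 1) div 2)" "ge_all_first_move l v (g div 2)"
    using \<open>2 \<le> g\<close> fits IH by auto
  have selected: "prefix_sat l (alt QAll (Suc v)) (qf_ite (Le (Var (Suc j)) (Var j)) ?p ?q) (vs @ [a])
    \<longleftrightarrow> (\<forall>b\<in>{0..l}. if b \<le> a then gap_test ((g + 1) div 2) sv a b else gap_test (g div 2) a tv b)"
    unfolding j_def sv_def tv_def by (rule prefix_sat_select_ge_all[OF halves(3,4) vs s t a])
  have guard: "qf_vars (Conj (Less s (Var j)) (Less (Var j) t)) \<subseteq> {..<length (vs @ [a])}"
    using s t by (auto simp: in_scope_def j_def)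
  have "prefix_sat l (alt QAll (Suc v)) (ge_ex (Suc (Suc v)) g j s t) (vs @ [a]) \<longleftrightarrow>
    sv < a \<and> a < tv \<and>
      prefix_sat l (alt QAll (Suc v)) (qf_ite (Le (Var (Suc j)) (Var j)) ?p ?q) (vs @ [a])"
    using \<open>2 \<le> g\<close> vals
    by (auto simp: prefix_sat_qf_ite[OF guard] prefix_sat_qf Let_def simp del: alt.simps ge_all.simps)
  also have "\<dots> \<longleftrightarrow> sv < a \<and> a < tv \<and> sv + (g + 1) div 2 \<le> a \<and> a + g div 2 \<le> tv"
    using selected all_gap_test_split_iff[of sv a tv l "(g + 1) div 2" "g div 2"] halves(1,2)
      term_val_le[OF vs t]
    unfolding tv_def by blast
  also have "\<dots> \<longleftrightarrow> splits_gap g sv tv a"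
    using \<open>2 \<le> g\<close> by (simp add: splits_gap_def)
  finally show "prefix_sat l (alt QAll (Suc v)) (ge_ex (Suc (Suc v)) g j s t) (vs @ [a]) =
    splits_gap g sv tv a" .
qed

lemma ge_all_first_move_Suc:
  assumes "2 \<le> g" and fits: "fits_all (Suc (Suc v)) g"
    and IH: "\<And>h. fits_ex (Suc v) h \<Longrightarrow> ge_ex_first_move l v h"
  shows "ge_all_first_move l (Suc v) g"
  unfolding ge_all_first_move_def
proof (intro allI impI)
  fix vs s t b
  assume vs: "set vs \<subseteq> {..l}" and s: "in_scope (length vs) s" and t: "in_scope (length vs) t"
    and b: "b \<le> l"
  define j sv tv where "j = length vs" and "sv = term_val l vs s" and "tv = term_val l vs t"
  have vals: "term_val l (vs @ [b]) s = sv" "term_val l (vs @ [b]) t = tv"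
    "term_val l (vs @ [b]) (Var j) = b"
    using s t by (simp_all add: sv_def tv_def j_def)
  let ?p = "ge_ex (Suc v) (g div 2 + 1) (Suc j) s (Var j)"
  let ?q = "ge_ex (Suc v) ((g + 1) div 2) (Suc j) (Var j) t"
  have halves: "1 \<le> g div 2 + 1" "1 \<le> (g + 1) div 2"
    "ge_ex_first_move l v (g div 2 + 1)" "ge_ex_first_move l v ((g + 1) div 2)"
    using \<open>2 \<le> g\<close> fits IH by auto
  have selected: "prefix_sat l (alt QEx (Suc v)) (qf_ite (Le (Var (Suc j)) (Var j)) ?p ?q) (vs @ [b])
    \<longleftrightarrow> (\<exists>a\<in>{0..l}. if a \<le> b then splits_gap (g div 2 + 1) sv b a
                       else splits_gap ((g + 1) div 2) b tv a)"
    unfolding j_def sv_def tv_def by (rule prefix_sat_select_ge_ex[OF halves(3,4) vs s t b])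
  have guard: "qf_vars (Conj (Less s (Var j)) (Le (Var j) t)) \<subseteq> {..<length (vs @ [b])}"
    using s t by (auto simp: in_scope_def j_def)
  have "prefix_sat l (alt QEx (Suc v)) (ge_all (Suc (Suc v)) g j s t) (vs @ [b]) \<longleftrightarrow>
    (if sv < b \<and> b \<le> tv
     then prefix_sat l (alt QEx (Suc v)) (qf_ite (Le (Var (Suc j)) (Var j)) ?p ?q) (vs @ [b])
     else sv < tv)"
    using \<open>2 \<le> g\<close> vals s t
    by (auto simp: prefix_sat_qf_ite[OF guard] prefix_sat_Less_append Let_def
        simp del: alt.simps ge_ex.simps)
  also have "\<dots> \<longleftrightarrow> (if sv < b \<and> b \<le> tv then sv + (g div 2 + 1) \<le> b \<or> b + (g + 1) div 2 \<le> tv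
                   else sv < tv)"
    using selected ex_splits_gap_split_iff[of b tv l "g div 2 + 1" "(g + 1) div 2" sv] halves(1,2)
      term_val_le[OF vs t]
    unfolding tv_def by auto
  also have "\<dots> \<longleftrightarrow> gap_test g sv tv b"
    using \<open>2 \<le> g\<close> by (simp add: gap_test_def)
  finally show "prefix_sat l (alt QEx (Suc v)) (ge_all (Suc (Suc v)) g j s t) (vs @ [b]) =
    gap_test g sv tv b" .
qed

lemma ge_first_move:
  "(fits_ex (Suc v) g \<longrightarrow> ge_ex_first_move l v g) \<and>
   (fits_all (Suc v) g \<longrightarrow> ge_all_first_move l v g)"
proof (induction v arbitrary: g)
  case 0
  have "g \<le> 1" if "fits_all 1 g"
    using that by simp presburger
  then show ?case
    using ge_ex_first_move_0 ge_all_first_move_trivial by (metis One_nat_def)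
next
  case (Suc v)
  show ?case
  proof (cases "g \<le> 1")
    case True
    then show ?thesis
      using ge_ex_first_move_trivial ge_all_first_move_trivial by blast
  next
    case False
    then have "2 \<le> g" by simp
    then show ?thesis
      using Suc.IH ge_ex_first_move_Suc[of g v l] ge_all_first_move_Suc[of g v l] by blast
  qed
qed

lemma prefix_sat_ge_ex:
  assumes "set vs \<subseteq> {..l}" "in_scope (length vs) s" "in_scope (length vs) t"
    and "1 \<le> g" "fits_ex v g"
  shows "prefix_sat l (alt QEx v) (ge_ex v g (length vs) s t) vs \<longleftrightarrow>
    term_val l vs s + g \<le> term_val l vs t"
proof (cases v)
  case 0
  with assms have "g = 1" by simp
  with assms 0 show ?thesis by (simp add: Suc_le_eq)
next
  case (Suc w)
  have "prefix_sat l (alt QEx v) (ge_ex v g (length vs) s t) vs \<longleftrightarrow>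
    (\<exists>a\<in>{0..l}. splits_gap g (term_val l vs s) (term_val l vs t) a)"
    using assms ge_first_move[of w g l] Suc
    by (auto simp: ge_ex_first_move_def simp del: ge_ex.simps)
  also have "\<dots> \<longleftrightarrow> term_val l vs s + g \<le> term_val l vs t"
    using assms by (simp add: ex_splits_gap_iff term_val_le)
  finally show ?thesis .
qed

lemma prefix_sat_ge_all:
  assumes "set vs \<subseteq> {..l}" "in_scope (length vs) s" "in_scope (length vs) t"
    and "1 \<le> g" "fits_all v g"
  shows "prefix_sat l (alt QAll v) (ge_all v g (length vs) s t) vs \<longleftrightarrow>
    term_val l vs s + g \<le> term_val l vs t"
proof (cases v)
  case 0
  with assms have "g = 1" by simp
  with assms 0 show ?thesis by (simp add: Suc_le_eq)
next
  case (Suc w)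
  have "prefix_sat l (alt QAll v) (ge_all v g (length vs) s t) vs \<longleftrightarrow>
    (\<forall>b\<in>{0..l}. gap_test g (term_val l vs s) (term_val l vs t) b)"
    using assms ge_first_move[of w g l] Suc
    by (auto simp: ge_all_first_move_def simp del: ge_all.simps)
  also have "\<dots> \<longleftrightarrow> term_val l vs s + g \<le> term_val l vs t"
    using assms by (simp add: all_gap_test_iff term_val_le)
  finally show ?thesis .
qed

section \<open>Sentences fixing the length\<close>

definition eq_all :: "nat \<Rightarrow> nat \<Rightarrow> nat \<Rightarrow> trm \<Rightarrow> trm \<Rightarrow> qf" where
  "eq_all v n j s t = qf_ite (Eq (Var j) t) (ge_ex v n (Suc j) s t)
     (qf_ite (Conj (Less s (Var j)) (Less (Var j) t)) (Neg (ge_all v n (Suc j) s (Var j))) TT)"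

text \<open>Without the guard \<open>a < t\<close> the right half would hold vacuously for \<open>a \<ge> t\<close>.\<close>

definition eq_ex :: "nat \<Rightarrow> nat \<Rightarrow> nat \<Rightarrow> trm \<Rightarrow> trm \<Rightarrow> qf" where
  "eq_ex v n j s t = qf_ite (Less (Var j) t)
     (qf_ite (Le (Var (Suc j)) (Var j))
       (eq_all v ((n + 1) div 2) (Suc j) s (Var j)) (eq_all v (n div 2) (Suc j) (Var j) t))
     FF"

lemma qf_vars_eq_all: "qf_vars (eq_all v n j s t) \<subseteq> {..<j + Suc v} \<union> term_vars s \<union> term_vars t"
  using qf_vars_ge[of v n "Suc j" s t] qf_vars_ge[of v n "Suc j" s "Var j"]
  by (auto simp: eq_all_def)

lemma qf_vars_eq_ex: "qf_vars (eq_ex v n j s t) \<subseteq> {..<j + Suc (Suc v)} \<union> term_vars s \<union> term_vars t"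
  using qf_vars_eq_all[of v "(n + 1) div 2" "Suc j" s "Var j"] qf_vars_eq_all[of v "n div 2" "Suc j" "Var j" t]
  by (auto simp: eq_ex_def)

lemma prefix_sat_eq_all_first_move:
  assumes vs: "set vs \<subseteq> {..l}" and s: "in_scope (length vs) s" and t: "in_scope (length vs) t"
    and n: "1 \<le> n" "fits_ex v n" "fits_all v n" and z: "z \<le> l"
  shows "prefix_sat l (alt QEx v) (eq_all v n (length vs) s t) (vs @ [z]) \<longleftrightarrow>
    exact_gap_test n (term_val l vs s) (term_val l vs t) z"
proof -
  let ?j = "length vs"
  have scope: "set (vs @ [z]) \<subseteq> {..l}" "in_scope (length (vs @ [z])) s"
    "in_scope (length (vs @ [z])) t" "in_scope (length (vs @ [z])) (Var ?j)"
    using vs z s t by (auto simp: in_scope_Suc)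
  have guards: "qf_vars (Eq (Var ?j) t) \<subseteq> {..<length (vs @ [z])}"
    "qf_vars (Conj (Less s (Var ?j)) (Less (Var ?j) t)) \<subseteq> {..<length (vs @ [z])}"
    using s t by (auto simp: in_scope_def)
  have neg: "prefix_sat l (alt QEx v) (Neg (ge_all v n (Suc ?j) s (Var ?j))) (vs @ [z]) \<longleftrightarrow>
    \<not> prefix_sat l (alt QAll v) (ge_all v n (Suc ?j) s (Var ?j)) (vs @ [z])"
    using prefix_sat_neg[of l "alt QAll v"] by (simp add: map_flipq_alt)
  show ?thesis
    unfolding eq_all_def prefix_sat_qf_ite[OF guards(1)] prefix_sat_qf_ite[OF guards(2)] neg
      prefix_sat_ge_ex[OF scope(1,2,3) n(1,2), simplified]
      prefix_sat_ge_all[OF scope(1,2,4) n(1,3), simplified]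
    using s t by (simp add: prefix_sat_qf exact_gap_test_def)
qed

lemma prefix_sat_eq_all:
  assumes "set vs \<subseteq> {..l}" "in_scope (length vs) s" "in_scope (length vs) t"
    and "1 \<le> n" "fits_ex v n" "fits_all v n"
  shows "prefix_sat l (alt QAll (Suc v)) (eq_all v n (length vs) s t) vs \<longleftrightarrow>
    term_val l vs s + n = term_val l vs t"
  using assms prefix_sat_eq_all_first_move[OF assms]
  by (simp add: all_exact_gap_test_iff term_val_le)

lemma prefix_sat_eq_ex_first_move:
  assumes vs: "set vs \<subseteq> {..l}" and s: "in_scope (length vs) s" and t: "in_scope (length vs) t"
    and n: "2 \<le> n" and fits: "\<forall>h\<in>{n div 2, (n + 1) div 2}. fits_ex v h \<and> fits_all v h"
    and a: "a \<le> l"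
  shows "prefix_sat l (alt QAll (Suc v)) (eq_ex v n (length vs) s t) (vs @ [a]) \<longleftrightarrow>
    a < term_val l vs t \<and> term_val l vs s + (n + 1) div 2 = a \<and> a + n div 2 = term_val l vs t"
proof -
  define j sv tv where "j = length vs" and "sv = term_val l vs s" and "tv = term_val l vs t"
  have halves: "1 \<le> (n + 1) div 2" "1 \<le> n div 2"
    using n by auto
  have scope: "set (vs @ [a]) \<subseteq> {..l}" "in_scope (length (vs @ [a])) s"
    "in_scope (length (vs @ [a])) t" "in_scope (length (vs @ [a])) (Var j)"
    using vs a s t by (auto simp: j_def in_scope_Suc)
  have "prefix_sat l (alt QEx v) (eq_all v ((n + 1) div 2) (Suc j) s (Var j)) (vs @ [a, b])
      = exact_gap_test ((n + 1) div 2) sv a b"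
    "prefix_sat l (alt QEx v) (eq_all v (n div 2) (Suc j) (Var j) t) (vs @ [a, b])
      = exact_gap_test (n div 2) a tv b" if "b \<le> l" for b
    using prefix_sat_eq_all_first_move[OF scope(1,2,4) halves(1)]
      prefix_sat_eq_all_first_move[OF scope(1,4,3) halves(2)] fits that s t
    by (simp_all add: j_def sv_def tv_def)
  then have "prefix_sat l (alt QAll (Suc v)) (qf_ite (Le (Var (Suc j)) (Var j))
      (eq_all v ((n + 1) div 2) (Suc j) s (Var j)) (eq_all v (n div 2) (Suc j) (Var j) t)) (vs @ [a])
    \<longleftrightarrow> (\<forall>b\<in>{0..l}. if b \<le> a then exact_gap_test ((n + 1) div 2) sv a b
                         else exact_gap_test (n div 2) a tv b)"
    by (simp add: prefix_sat_select j_def)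
  moreover have "qf_vars (Less (Var j) t) \<subseteq> {..<length (vs @ [a])}"
    using t by (auto simp: in_scope_def j_def)
  ultimately have "prefix_sat l (alt QAll (Suc v)) (eq_ex v n j s t) (vs @ [a]) \<longleftrightarrow>
    a < tv \<and> (\<forall>b\<in>{0..l}. if b \<le> a then exact_gap_test ((n + 1) div 2) sv a b
                           else exact_gap_test (n div 2) a tv b)"
    using t by (simp add: eq_ex_def prefix_sat_qf_ite prefix_sat_qf j_def tv_def del: alt.simps)
  also have "\<dots> \<longleftrightarrow> a < tv \<and> sv + (n + 1) div 2 = a \<and> a + n div 2 = tv"
    using all_exact_gap_test_split_iff[OF _ _ halves, of a tv l sv] term_val_le[OF vs t]
    unfolding tv_def by blast
  finally show ?thesis
    by (simp add: j_def sv_def tv_def)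
qed

lemma prefix_sat_eq_ex:
  assumes "set vs \<subseteq> {..l}" "in_scope (length vs) s" "in_scope (length vs) t"
    and "2 \<le> n" "\<forall>h\<in>{n div 2, (n + 1) div 2}. fits_ex v h \<and> fits_all v h"
  shows "prefix_sat l (alt QEx (Suc (Suc v))) (eq_ex v n (length vs) s t) vs \<longleftrightarrow>
    term_val l vs s + n = term_val l vs t"
proof -
  have "alt QEx (Suc (Suc v)) = QEx # alt QAll (Suc v)"
    by simp
  then have "prefix_sat l (alt QEx (Suc (Suc v))) (eq_ex v n (length vs) s t) vs \<longleftrightarrow>
    (\<exists>a\<in>{0..l}. a < term_val l vs t \<and> term_val l vs s + (n + 1) div 2 = a \<and>
                 a + n div 2 = term_val l vs t)"
    using prefix_sat_eq_ex_first_move[OF assms] by (simp only: prefix_sat.simps) auto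
  also have "\<dots> \<longleftrightarrow> term_val l vs s + n = term_val l vs t"
    using assms(4) term_val_le[OF assms(1,3)] by auto
  finally show ?thesis .
qed

definition characterizes :: "nat \<Rightarrow> prenex \<Rightarrow> bool" where
  "characterizes n \<phi> \<longleftrightarrow> is_sentence \<phi> \<and> (\<forall>m. holds_in_L m \<phi> \<longleftrightarrow> m = n)"

lemma characterizes_eq_all:
  assumes "1 \<le> n" "fits_ex v n" "fits_all v n"
  shows "characterizes n (alt QAll (Suc v), eq_all v n 0 Cmin Cmax)"
  using qf_vars_eq_all[of v n 0 Cmin Cmax] prefix_sat_eq_all[of "[]" _ Cmin Cmax, OF _ _ _ assms]
  by (auto simp: characterizes_def is_sentence_def holds_in_L_def simp del: alt.simps)

lemma characterizes_eq_ex: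
  assumes "2 \<le> n" "\<forall>h\<in>{n div 2, (n + 1) div 2}. fits_ex v h \<and> fits_all v h"
  shows "characterizes n (alt QEx (Suc (Suc v)), eq_ex v n 0 Cmin Cmax)"
  using qf_vars_eq_ex[of v n 0 Cmin Cmax] prefix_sat_eq_ex[of "[]" _ Cmin Cmax, OF _ _ _ assms]
  by (auto simp: characterizes_def is_sentence_def holds_in_L_def simp del: alt.simps)

section \<open>Counting quantifiers\<close>

lemma fits_Suc: "(fits_ex v n \<longrightarrow> fits_ex (Suc v) n) \<and> (fits_all v n \<longrightarrow> fits_all (Suc v) n)"
proof (induction v arbitrary: n)
  case (Suc v)
  then show ?case by (simp only: fits_ex.simps fits_all.simps) blast
qed simp

text \<open>\<open>qstar n\<close> reaches \<open>2 * i + 1\<close> at \<open>n = thr i\<close> and \<open>2 * i + 2\<close> at \<open>n = 2 * thr i\<close>;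
  the same thresholds bound the gaps that fit into \<open>2 * i + 1\<close> and \<open>2 * i\<close> quantifiers.\<close>

primrec thr :: "nat \<Rightarrow> nat" where
  "thr 0 = 1"
| "thr (Suc i) = 4 * thr i - 1"

lemma thr_pos: "1 \<le> thr i"
  by (induction i) auto

lemma thr_gt: "i < thr i"
  by (induction i) (use thr_pos in auto)

lemma fits_thr: "(n \<le> 2 * thr i \<longrightarrow> fits_ex (2 * i + 1) n) \<and> (n \<le> thr i \<longrightarrow> fits_all (2 * i) n)"
proof (induction i arbitrary: n)
  case 0
  have "(n + 1) div 2 \<le> 1 \<and> n div 2 \<le> 1" if "n \<le> 2"
    using that by presburger
  then show ?case by (auto simp: numeral_eq_Suc)
next
  case (Suc i)
  have all: "fits_all (2 * Suc i) n" if "n \<le> thr (Suc i)" for n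
  proof -
    have "n div 2 + 1 \<le> 2 * thr i" "(n + 1) div 2 \<le> 2 * thr i"
      using that thr_pos[of i] by auto
    then have "fits_ex (2 * i + 1) (n div 2 + 1)" "fits_ex (2 * i + 1) ((n + 1) div 2)"
      using Suc.IH by auto
    then show ?thesis by (simp add: numeral_eq_Suc)
  qed
  have "fits_ex (2 * Suc i + 1) n" if "n \<le> 2 * thr (Suc i)" for n
  proof -
    have "(n + 1) div 2 \<le> thr (Suc i)" "n div 2 \<le> thr (Suc i)"
      using that by auto
    then show ?thesis using all by simp
  qed
  with all show ?case by blast
qed

lemma fits_le_double_thr: "n \<le> 2 * thr i \<Longrightarrow> fits_ex (2 * i + 2) n \<and> fits_all (2 * i + 2) n"
  using fits_thr[of n i] fits_thr[of n "Suc i"] fits_Suc[of "2 * i + 1" n] thr_pos[of i]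
  by auto

declare qstarE.simps [simp del] qstarA.simps [simp del]

lemma qstarE_eq: "qstarE n = (if n \<le> 1 then 2 else qstarA ((n + 1) div 2) + 1)"
  by (subst qstarE.simps) (auto elim!: evenE oddE)

lemma qstar_thr:
  "(thr i \<le> n \<longrightarrow> 2 * i + 1 \<le> qstarE n \<and> 2 * i + 1 \<le> qstarA n) \<and>
   (2 * thr i \<le> n + 1 \<longrightarrow> 2 * i + 2 \<le> qstarE n) \<and>
   (2 * thr i \<le> n \<longrightarrow> 2 * i + 2 \<le> qstarA n)"
proof (induction i arbitrary: n)
  case 0
  have pos: "1 \<le> qstarA n" "1 \<le> qstarE n" for n
    by (simp_all add: qstarA.simps[of n] qstarE_eq[of n])
  show ?case
    using pos by (auto simp: qstarA.simps[of n] qstarE_eq[of n])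
next
  case (Suc i)
  have odd_step: "2 * Suc i + 1 \<le> qstarE n \<and> 2 * Suc i + 1 \<le> qstarA n" if "thr (Suc i) \<le> n" for n
  proof -
    have "3 \<le> n" "2 * thr i \<le> (n + 1) div 2" "2 * thr i \<le> n div 2 + 1"
      using that thr_pos[of i] by auto
    then show ?thesis
      using Suc.IH[of "(n + 1) div 2"] Suc.IH[of "n div 2"] by (simp add: qstarA.simps[of n] qstarE_eq[of n])
  qed
  have "2 * Suc i + 2 \<le> qstarE n" if "2 * thr (Suc i) \<le> n + 1" for n
  proof -
    have "3 \<le> n" "thr (Suc i) \<le> (n + 1) div 2"
      using that thr_pos[of i] by auto
    then show ?thesis
      using odd_step[of "(n + 1) div 2"] by (simp add: qstarE_eq[of n])
  qed
  moreover have "2 * Suc i + 2 \<le> qstarA n" if "2 * thr (Suc i) \<le> n" for n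
  proof -
    have "3 \<le> n" "thr (Suc i) \<le> n div 2"
      using that thr_pos[of i] by auto
    then show ?thesis
      using odd_step[of "n div 2"] by (simp add: qstarA.simps[of n])
  qed
  ultimately show ?case
    using odd_step by blast
qed

lemma thr_cover: "1 \<le> n \<Longrightarrow> \<exists>i. thr i \<le> n \<and> n \<le> 2 * thr i \<or> 2 * thr i < n \<and> n < thr (Suc i)"
proof -
  assume "1 \<le> n"
  have "n < thr j \<Longrightarrow> \<exists>i. thr i \<le> n \<and> n \<le> 2 * thr i \<or> 2 * thr i < n \<and> n < thr (Suc i)" for j
  proof (induction j)
    case 0
    with \<open>1 \<le> n\<close> show ?case by simp
  next
    case (Suc j)
    then show ?case
      by (cases "n < thr j") (auto simp: not_less intro: exI[of _ j])
  qed
  then show ?thesis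
    using thr_gt[of n] by blast
qed

theorem mainTheorem5:
  fixes l :: nat
  assumes "l \<ge> 1"
  shows "\<exists>\<phi> :: prenex. is_sentence \<phi>
           \<and> holds_in_L l \<phi>
           \<and> (\<forall>m. m \<ge> 1 \<longrightarrow> m \<noteq> l \<longrightarrow> \<not> holds_in_L m \<phi>)
           \<and> length (fst \<phi>) \<le> qstar l + 2
           \<and> alternating_ends_forall (fst \<phi>)"
proof -
  obtain i where i: "thr i \<le> l \<and> l \<le> 2 * thr i \<or> 2 * thr i < l \<and> l < thr (Suc i)"
    using thr_cover assms by blast
  have "\<exists>\<phi>. characterizes l \<phi> \<and> length (fst \<phi>) \<le> qstar l + 2 \<and> alternating_ends_forall (fst \<phi>)"
  proof (cases "l \<le> 2 * thr i")
    case True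
    with i have "2 * i + 1 \<le> qstar l"
      using qstar_thr[of i l] by (auto simp: qstar_def)
    moreover have "characterizes l (alt QAll (Suc (2 * i + 2)), eq_all (2 * i + 2) l 0 Cmin Cmax)"
      using characterizes_eq_all fits_le_double_thr[OF True] assms by blast
    ultimately show ?thesis
      by (intro exI) (auto simp: alternating_ends_forall_alt simp del: alt.simps)
  next
    case False
    with i have "2 * i + 2 \<le> qstar l"
      using qstar_thr[of i l] by (auto simp: qstar_def)
    have "\<forall>h\<in>{l div 2, (l + 1) div 2}. fits_ex (2 * i + 2) h \<and> fits_all (2 * i + 2) h"
      using False i fits_le_double_thr[of "l div 2" i] fits_le_double_thr[of "(l + 1) div 2" i]
      by (simp del: fits_ex.simps fits_all.simps)
    moreover have "2 \<le> l"
      using False thr_pos[of i] by simp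
    ultimately have "characterizes l (alt QEx (Suc (Suc (2 * i + 2))), eq_ex (2 * i + 2) l 0 Cmin Cmax)"
      using characterizes_eq_ex by blast
    with \<open>2 * i + 2 \<le> qstar l\<close> show ?thesis
      by (intro exI) (auto simp: alternating_ends_forall_alt simp del: alt.simps)
  qed
  then show ?thesis
    unfolding characterizes_def by blast
qed

end
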